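(* Let $\mathbb F$ be a field, fix a partition of $\{1,\dots,m\}$ into consecutive (possibly empty) intervals $I_1,\dots,I_k$ (in increasing order), and let $D$ be an $m\times m$ differential matrix over $\mathbb F$ that is block-superdiagonal with respect to this partition. Then there exist an $m\times m$ almost-Jordan differential matrix $\underline D$ that is block-superdiagonal with respect to the same partition, and an $m\times m$ triangular matrix $B$ that is block-diagonal with respect to the same partition, such that $D=B\,\underline D\,B^{-1}$.
   Context: A differential matrix is a square matrix $D$ with $D^2=0$. A differential matrix is Jordan if it is block-diagonal with every diagonal block equal to either the $1\times 1$ zero matrix $[0]$ or the $2\times 2$ matrix $\begin{bmatrix}0&1\\0&0\end{bmatrix}$. A differential matrix $\underline D$ is almost-Jordan if there is a permutation matrix $P$ such that $P^{-1}\underline D P$ is Jordan. A square matrix is triangular if it is upper-triangular and invertible. Given a partition of the index set $\{1,\dots,m\}$ into consecutive intervals $I_1,\dots,I_k$, an $m\times m$ matrix $M$ is block-diagonal if $M_{ab}=0$ whenever $a\in I_i$, $b\in I_j$ with $i\ne j$, and block-superdiagonal if $M_{ab}=0$ whenever $a\in I_i$, $b\in I_j$ with $j\neq i+1$. *)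

theory Defs
  imports "Jordan_Normal_Form.Matrix" "HOL-Combinatorics.Permutations"
begin

(* Matrices are Jordan_Normal_Form matrices with 0-based indices {0..<m}.
   A partition of the index set into k consecutive (possibly empty) intervals
   in increasing order is given by cut points c 0 = 0 <= c 1 <= ... <= c k = m;
   the i-th interval (1 <= i <= k) is {c (i-1) ..< c i}. *)

definition interval_partition :: "nat \<Rightarrow> nat \<Rightarrow> (nat \<Rightarrow> nat) \<Rightarrow> bool" where
  "interval_partition m k c \<longleftrightarrow> c 0 = 0 \<and> c k = m \<and> (\<forall>i<k. c i \<le> c (Suc i))"

definition block :: "(nat \<Rightarrow> nat) \<Rightarrow> nat \<Rightarrow> nat set" where
  "block c i = {c (i - 1) ..< c i}"

definition block_diagonal :: "nat \<Rightarrow> (nat \<Rightarrow> nat) \<Rightarrow> 'a::zero mat \<Rightarrow> bool" where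
  "block_diagonal k c M \<longleftrightarrow>
     (\<forall>i\<in>{1..k}. \<forall>j\<in>{1..k}. \<forall>a\<in>block c i. \<forall>b\<in>block c j. i \<noteq> j \<longrightarrow> M $$ (a, b) = 0)"

definition block_superdiagonal :: "nat \<Rightarrow> (nat \<Rightarrow> nat) \<Rightarrow> 'a::zero mat \<Rightarrow> bool" where
  "block_superdiagonal k c M \<longleftrightarrow>
     (\<forall>i\<in>{1..k}. \<forall>j\<in>{1..k}. \<forall>a\<in>block c i. \<forall>b\<in>block c j. j \<noteq> i + 1 \<longrightarrow> M $$ (a, b) = 0)"

definition differential :: "'a::semiring_1 mat \<Rightarrow> bool" where
  "differential D \<longleftrightarrow> square_mat D \<and> D * D = 0\<^sub>m (dim_row D) (dim_col D)"

(* Jordan: block diagonal with diagonal blocks [0] (size 1) or [[0,1],[0,0]] (size 2);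
   ss is the list of block sizes along the diagonal. *)
definition jordan_of_sizes :: "nat list \<Rightarrow> 'a::{zero,one} mat" where
  "jordan_of_sizes ss = mat (sum_list ss) (sum_list ss)
     (\<lambda>(a, b). if \<exists>i<length ss. ss ! i = 2 \<and> a = sum_list (take i ss) \<and> b = a + 1 then 1 else 0)"

definition jordan :: "'a::semiring_1 mat \<Rightarrow> bool" where
  "jordan D \<longleftrightarrow> differential D \<and> (\<exists>ss. set ss \<subseteq> {1, 2} \<and> D = jordan_of_sizes ss)"

definition perm_matrix :: "nat \<Rightarrow> (nat \<Rightarrow> nat) \<Rightarrow> 'a::{zero,one} mat" where
  "perm_matrix m p = mat m m (\<lambda>(i, j). if i = p j then 1 else 0)"

definition almost_jordan :: "'a::semiring_1 mat \<Rightarrow> bool" where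
  "almost_jordan D \<longleftrightarrow> differential D \<and>
     (\<exists>p Pinv. p permutes {..<dim_row D} \<and>
        inverts_mat (perm_matrix (dim_row D) p) Pinv \<and> inverts_mat Pinv (perm_matrix (dim_row D) p) \<and>
        jordan (Pinv * D * perm_matrix (dim_row D) p))"

definition triangular :: "'a::semiring_1 mat \<Rightarrow> bool" where
  "triangular B \<longleftrightarrow> upper_triangular B \<and> invertible_mat B"

end

theory Submission
  imports Defs "Jordan_Normal_Form.Determinant"
begin

(*
  Grade the indices by g = block_index c. Then D is homogeneous of degree one: a nonzero entry
  D(a, b) forces g b = g a + 1, so in particular D is strictly upper triangular.

  We build the columns b_0, ..., b_(m-1) of B one at a time. Each b_j has pivot j and is
  homogeneous of degree g j, and a partial injection sigma on a set S of indices, with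
  sigma ` S disjoint from S, records the action of D: D b_j = b_(sigma j) for j in S and
  D b_j = 0 otherwise. To add the unit vector e_n, expand D e_n = sum_j w_j b_j. Since D^2 = 0,
  w vanishes on S. The vector b_n = e_n - sum_(j in S) w_(sigma j) b_j then satisfies
  D b_n = u, where u is the part of the expansion on indices outside S and sigma ` S, and
  D u = 0. If u = 0, b_n is simply added. Otherwise u has the same pivot and degree as the
  basis vector b_i it replaces, and we set sigma n = i.

  In the end D B = B M, where M is the 0/1 matrix with ones at (sigma j, j). A permutation
  that lists each pair (sigma j, j) consecutively conjugates M into Jordan form.
*)

section \<open>Interval partitions and block indices\<close>

lemma interval_partition_mono:
  assumes "interval_partition m k c" and "i \<le> j" and "j \<le> k"
  shows "c i \<le> c j"
  using assms(2,3)
  by (induction j rule: dec_induct)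
    (use assms(1) in \<open>auto simp: interval_partition_def intro: order_trans\<close>)

definition block_index :: "(nat \<Rightarrow> nat) \<Rightarrow> nat \<Rightarrow> nat" where
  "block_index c x = (LEAST i. x < c i)"

lemma
  assumes "x < c j"
  shows block_index_le: "block_index c x \<le> j" and less_cut_block_index: "x < c (block_index c x)"
  using assms unfolding block_index_def by (auto intro: Least_le LeastI)

lemma
  assumes "interval_partition m k c" and "x < m"
  shows block_index_pos: "0 < block_index c x"
    and block_index_le_k: "block_index c x \<le> k"
    and in_block_index: "x \<in> block c (block_index c x)"
proof -
  have "x < c k" using assms unfolding interval_partition_def by simp
  then show "block_index c x \<le> k" by (rule block_index_le)
  have less: "x < c (block_index c x)" using \<open>x < c k\<close> by (rule less_cut_block_index)
  show pos: "0 < block_index c x"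
    using less assms(1) unfolding interval_partition_def by (auto intro: Nat.gr0I)
  have "\<not> x < c (block_index c x - 1)"
    unfolding block_index_def by (rule not_less_Least) (use pos in \<open>simp add: block_index_def\<close>)
  then show "x \<in> block c (block_index c x)" using less unfolding block_def by auto
qed

lemma block_index_eqI:
  assumes "interval_partition m k c" and "0 < i" and "i \<le> k" and "x \<in> block c i"
  shows "block_index c x = i"
proof -
  have x: "c (i - 1) \<le> x" "x < c i" using assms(4) unfolding block_def by auto
  show ?thesis
  proof (rule ccontr)
    assume "block_index c x \<noteq> i"
    then have "block_index c x \<le> i - 1" using block_index_le[of x c i, OF x(2)] by simp
    then have "c (block_index c x) \<le> c (i - 1)"
      using interval_partition_mono[OF assms(1)] assms(3) by simp
    then show False using less_cut_block_index[of x c i, OF x(2)] x(1) by simp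
  qed
qed

lemma block_index_mono:
  assumes "interval_partition m k c" and "x \<le> y" and "y < m"
  shows "block_index c x \<le> block_index c y"
proof -
  have "y < c (block_index c y)"
    using in_block_index[OF assms(1,3)] unfolding block_def by simp
  then show ?thesis using assms(2) by (intro block_index_le) simp
qed

lemma in_block_less:
  assumes "interval_partition m k c" and "i \<le> k" and "x \<in> block c i"
  shows "x < m"
  using interval_partition_mono[OF assms(1) assms(2) order_refl] assms
  unfolding block_def interval_partition_def by auto

lemma ball_blocks_iff:
  assumes "interval_partition m k c"
  shows "(\<forall>i\<in>{1..k}. \<forall>a\<in>block c i. P i a) \<longleftrightarrow> (\<forall>a<m. P (block_index c a) a)"
proof (intro iffI allI impI ballI)
  fix a assume "\<forall>i\<in>{1..k}. \<forall>a\<in>block c i. P i a" and "a < m"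
  moreover have "block_index c a \<in> {1..k}"
    using block_index_pos[OF assms \<open>a < m\<close>] block_index_le_k[OF assms \<open>a < m\<close>] by simp
  ultimately show "P (block_index c a) a" using in_block_index[OF assms \<open>a < m\<close>] by blast
next
  fix i a assume "\<forall>a<m. P (block_index c a) a" and "i \<in> {1..k}" and "a \<in> block c i"
  moreover have "a < m" and "block_index c a = i"
    using block_index_eqI[OF assms, of i a] in_block_less[OF assms, of i a] \<open>i \<in> {1..k}\<close> \<open>a \<in> block c i\<close>
    by auto
  ultimately show "P i a" by metis
qed

lemma block_superdiagonal_iff:
  assumes "interval_partition m k c"
  shows "block_superdiagonal k c M \<longleftrightarrow>
    (\<forall>a<m. \<forall>b<m. M $$ (a, b) \<noteq> 0 \<longrightarrow> block_index c b = Suc (block_index c a))"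
proof -
  have "block_superdiagonal k c M \<longleftrightarrow> (\<forall>i\<in>{1..k}. \<forall>a\<in>block c i. \<forall>j\<in>{1..k}. \<forall>b\<in>block c j.
      j \<noteq> i + 1 \<longrightarrow> M $$ (a, b) = 0)"
    unfolding block_superdiagonal_def by blast
  then show ?thesis unfolding ball_blocks_iff[OF assms] by auto
qed

lemma block_diagonal_iff:
  assumes "interval_partition m k c"
  shows "block_diagonal k c M \<longleftrightarrow>
    (\<forall>a<m. \<forall>b<m. M $$ (a, b) \<noteq> 0 \<longrightarrow> block_index c a = block_index c b)"
proof -
  have "block_diagonal k c M \<longleftrightarrow> (\<forall>i\<in>{1..k}. \<forall>a\<in>block c i. \<forall>j\<in>{1..k}. \<forall>b\<in>block c j.
      i \<noteq> j \<longrightarrow> M $$ (a, b) = 0)"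
    unfolding block_diagonal_def by blast
  then show ?thesis unfolding ball_blocks_iff[OF assms] by auto
qed

section \<open>Vectors, linear combinations and triangular families\<close>

definition mat_app :: "'a::semiring_0 mat \<Rightarrow> (nat \<Rightarrow> 'a) \<Rightarrow> nat \<Rightarrow> 'a" where
  "mat_app M v x = (if x < dim_row M then \<Sum>y<dim_col M. M $$ (x, y) * v y else 0)"

definition lin_comb :: "(nat \<Rightarrow> 'a::semiring_0) \<Rightarrow> (nat \<Rightarrow> nat \<Rightarrow> 'a) \<Rightarrow> nat set \<Rightarrow> nat \<Rightarrow> 'a" where
  "lin_comb w b A x = (\<Sum>j\<in>A. w j * b j x)"

lemma lin_comb_union:
  "finite A \<Longrightarrow> finite B \<Longrightarrow> A \<inter> B = {} \<Longrightarrow>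
    lin_comb w b (A \<union> B) x = lin_comb w b A x + lin_comb w b B x"
  unfolding lin_comb_def by (rule sum.union_disjoint)

lemma mat_app_diff:
  fixes M :: "'a::ring mat"
  shows "mat_app M (\<lambda>x. u x - v x) = (\<lambda>x. mat_app M u x - mat_app M v x)"
  unfolding mat_app_def by (simp add: fun_eq_iff right_diff_distrib sum_subtractf)

lemma mat_app_lin_comb:
  fixes M :: "'a::comm_semiring_0 mat"
  shows "mat_app M (lin_comb w b A) = lin_comb w (\<lambda>j. mat_app M (b j)) A"
proof
  fix x
  have "(\<Sum>y<dim_col M. M $$ (x, y) * (\<Sum>j\<in>A. w j * b j y))
      = (\<Sum>j\<in>A. w j * (\<Sum>y<dim_col M. M $$ (x, y) * b j y))"
    by (simp add: sum_distrib_left mult.left_commute sum.swap[of _ A])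
  then show "mat_app M (lin_comb w b A) x = lin_comb w (\<lambda>j. mat_app M (b j)) A x"
    unfolding mat_app_def lin_comb_def by simp
qed

lemma mat_app_unit:
  fixes M :: "'a::semiring_1 mat"
  assumes "n < dim_col M"
  shows "mat_app M (\<lambda>y. of_bool (y = n)) = (\<lambda>x. if x < dim_row M then M $$ (x, n) else 0)"
  using assms unfolding mat_app_def by (simp add: of_bool_def if_distrib cong: if_cong)

lemma mat_app_mult:
  assumes "M \<in> carrier_mat l m" and "N \<in> carrier_mat m n"
  shows "mat_app M (mat_app N v) = mat_app (M * N) v"
proof
  fix x
  show "mat_app M (mat_app N v) x = mat_app (M * N) v x"
  proof (cases "x < l")
    case True
    have "(\<Sum>y<m. M $$ (x, y) * (\<Sum>z<n. N $$ (y, z) * v z))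
        = (\<Sum>z<n. (\<Sum>y<m. M $$ (x, y) * N $$ (y, z)) * v z)"
      by (simp add: sum_distrib_left sum_distrib_right mult.assoc sum.swap[of _ "{..<m}"])
    also have "\<dots> = (\<Sum>z<n. (M * N) $$ (x, z) * v z)"
      using True assms by (intro sum.cong) (auto simp: scalar_prod_def atLeast0LessThan)
    finally show ?thesis using True assms unfolding mat_app_def by simp
  qed (use assms in \<open>simp add: mat_app_def\<close>)
qed

definition homogeneous :: "(nat \<Rightarrow> nat) \<Rightarrow> nat \<Rightarrow> (nat \<Rightarrow> 'a::zero) \<Rightarrow> bool" where
  "homogeneous g d v \<longleftrightarrow> (\<forall>x. v x \<noteq> 0 \<longrightarrow> g x = d)"

lemma homogeneous_diff:
  "homogeneous g d u \<Longrightarrow> homogeneous g d v \<Longrightarrow> homogeneous g d (\<lambda>x. u x - v x :: 'a::group_add)"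
  unfolding homogeneous_def by (metis diff_self)

lemma homogeneous_lin_comb:
  assumes "\<And>j. j \<in> A \<Longrightarrow> w j \<noteq> 0 \<Longrightarrow> homogeneous g d (b j)"
  shows "homogeneous g d (lin_comb w b A)"
  unfolding homogeneous_def lin_comb_def
proof (intro allI impI)
  fix x assume "(\<Sum>j\<in>A. w j * b j x) \<noteq> 0"
  then obtain j where "j \<in> A" "w j * b j x \<noteq> 0"
    by (meson sum.not_neutral_contains_not_neutral)
  then have "w j \<noteq> 0" and "b j x \<noteq> 0" by auto
  then show "g x = d" using assms[of j] \<open>j \<in> A\<close> unfolding homogeneous_def by blast
qed

definition triangular_family :: "nat \<Rightarrow> (nat \<Rightarrow> nat \<Rightarrow> 'a::zero) \<Rightarrow> bool" where
  "triangular_family n b \<longleftrightarrow> (\<forall>j<n. b j j \<noteq> 0 \<and> (\<forall>x>j. b j x = 0))"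

lemma lin_comb_pivot:
  assumes "triangular_family n b" and "A \<subseteq> {..<n}" and "i \<in> A"
    and "\<And>j. j \<in> A \<Longrightarrow> w j \<noteq> 0 \<Longrightarrow> j \<le> i"
  shows "lin_comb w b A i = w i * b i i" and "\<And>x. i < x \<Longrightarrow> lin_comb w b A x = 0"
proof -
  have below: "w j * b j x = 0" if "j \<in> A" "j \<noteq> i" "i \<le> x" for j x
  proof (cases "w j = 0")
    case False
    then have "j < x" using assms(4)[OF \<open>j \<in> A\<close>] that by simp
    then show ?thesis using assms(1,2) \<open>j \<in> A\<close> unfolding triangular_family_def by auto
  qed simp
  have "(\<Sum>j\<in>A. w j * b j i) = w i * b i i + (\<Sum>j\<in>A - {i}. w j * b j i)"
    using assms(2,3) by (simp add: sum.remove finite_subset)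
  also have "(\<Sum>j\<in>A - {i}. w j * b j i) = 0"
    using below by (intro sum.neutral) auto
  finally show "lin_comb w b A i = w i * b i i" unfolding lin_comb_def by simp
  show "lin_comb w b A x = 0" if "i < x" for x
  proof -
    have "w i * b i x = 0"
      using assms(1,2,3) that unfolding triangular_family_def by auto
    then show ?thesis
      unfolding lin_comb_def using below that by (intro sum.neutral) (metis less_imp_le)
  qed
qed

lemma lin_comb_eq_0_imp_coeff_eq_0:
  fixes w :: "nat \<Rightarrow> 'a::semiring_no_zero_divisors"
  assumes "triangular_family n b" and "A \<subseteq> {..<n}" and "lin_comb w b A = (\<lambda>_. 0)"
    and "j \<in> A"
  shows "w j = 0"
proof (rule ccontr)
  assume "w j \<noteq> 0"
  define i where "i = Max {j\<in>A. w j \<noteq> 0}"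
  have fin: "finite {j\<in>A. w j \<noteq> 0}"
    by (rule finite_subset[where B = "{..<n}"]) (use assms(2) in auto)
  have "i \<in> A" "w i \<noteq> 0" using Max_in[OF fin] \<open>w j \<noteq> 0\<close> assms(4) unfolding i_def by auto
  moreover have "\<And>j. j \<in> A \<Longrightarrow> w j \<noteq> 0 \<Longrightarrow> j \<le> i" using Max_ge[OF fin] unfolding i_def by auto
  ultimately have "lin_comb w b A i = w i * b i i" using lin_comb_pivot(1)[OF assms(1,2)] by blast
  moreover have "b i i \<noteq> 0" using \<open>i \<in> A\<close> assms(1,2) unfolding triangular_family_def by auto
  ultimately show False using \<open>w i \<noteq> 0\<close> assms(3) by (metis mult_eq_0_iff)
qed

lemma triangular_family_expansion:
  fixes v :: "nat \<Rightarrow> 'a::field"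
  assumes "triangular_family n b" and "\<And>j. j < n \<Longrightarrow> homogeneous g (g j) (b j)"
    and "\<And>x. v x \<noteq> 0 \<Longrightarrow> x < n \<and> P (g x)"
  shows "\<exists>w. v = lin_comb w b {..<n} \<and> (\<forall>j. w j \<noteq> 0 \<longrightarrow> j < n \<and> P (g j))"
  using assms
proof (induction n arbitrary: v)
  case 0
  then have "v = lin_comb (\<lambda>_. 0) b {..<0}" unfolding lin_comb_def by auto
  then show ?case by auto
next
  case (Suc n)
  define a where "a = v n / b n n"
  define v' where "v' x = v x - a * b n x" for x
  have tri: "triangular_family n b" "b n n \<noteq> 0" "\<And>x. n < x \<Longrightarrow> b n x = 0"
    using Suc.prems(1) unfolding triangular_family_def by auto
  have hom: "\<And>j. j < n \<Longrightarrow> homogeneous g (g j) (b j)" using Suc.prems(2) by simp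
  have "v' n = 0" using tri(2) unfolding v'_def a_def by simp
  have "x < n \<and> P (g x)" if nz: "v' x \<noteq> 0" for x
  proof -
    have "x \<noteq> n" using nz \<open>v' n = 0\<close> by auto
    moreover have "x \<le> n \<and> P (g x)"
    proof (cases "v x = 0")
      case False
      then show ?thesis using Suc.prems(3) by fastforce
    next
      case True
      then have "a \<noteq> 0" and bnx: "b n x \<noteq> 0" using nz unfolding v'_def by auto
      then have "P (g n)" using Suc.prems(3)[of n] unfolding a_def by auto
      moreover have "g x = g n" using Suc.prems(2)[of n] bnx unfolding homogeneous_def by auto
      moreover have "x \<le> n" using tri(3) bnx by (meson not_le)
      ultimately show ?thesis by simp
    qed
    ultimately show ?thesis by simp
  qed
  then obtain w where w: "v' = lin_comb w b {..<n}" "\<forall>j. w j \<noteq> 0 \<longrightarrow> j < n \<and> P (g j)"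
    using Suc.IH[OF tri(1) hom] by blast
  have "lin_comb (w(n := a)) b {..<Suc n} x = lin_comb w b {..<n} x + a * b n x" for x
    unfolding lin_comb_def by (simp add: sum.lessThan_Suc)
  then have "v = lin_comb (w(n := a)) b {..<Suc n}"
    using w(1) unfolding v'_def by (simp add: fun_eq_iff diff_eq_eq)
  moreover have "\<forall>j. (w(n := a)) j \<noteq> 0 \<longrightarrow> j < Suc n \<and> P (g j)"
    using w(2) Suc.prems(3)[of n] unfolding a_def by auto
  ultimately show ?case by blast
qed

lemma triangular_family_mat:
  fixes b :: "nat \<Rightarrow> nat \<Rightarrow> 'a::field"
  assumes "triangular_family m b"
  defines "B \<equiv> mat m m (\<lambda>(x, j). b j x)"
  shows "upper_triangular B" and "\<exists>B'. B' \<in> carrier_mat m m \<and> inverts_mat B B' \<and> inverts_mat B' B"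
proof -
  show ut: "upper_triangular B"
  proof (rule upper_triangularI)
    fix i j assume "j < i" "i < dim_row B"
    then show "B $$ (i, j) = 0" using assms(1) unfolding B_def triangular_family_def by simp
  qed
  have B: "B \<in> carrier_mat m m" unfolding B_def by simp
  have "det B = prod_list (diag_mat B)" by (rule det_upper_triangular[OF ut B])
  also have "\<dots> \<noteq> 0"
    using assms(1) unfolding diag_mat_def B_def triangular_family_def by (auto simp: prod_list_zero_iff)
  finally have "B \<in> Units (ring_mat TYPE('a) m undefined)" by (rule det_non_zero_imp_unit[OF B])
  then obtain B' where "B' \<in> carrier_mat m m" "B' * B = 1\<^sub>m m" "B * B' = 1\<^sub>m m"
    unfolding Units_def ring_mat_def by auto
  then show "\<exists>B'. B' \<in> carrier_mat m m \<and> inverts_mat B B' \<and> inverts_mat B' B"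
    using B unfolding inverts_mat_def by auto
qed

section \<open>Matching matrices are almost Jordan\<close>

definition matching_mat :: "nat \<Rightarrow> (nat \<Rightarrow> nat) \<Rightarrow> nat set \<Rightarrow> 'a::{zero,one} mat" where
  "matching_mat m \<sigma> S = mat m m (\<lambda>(i, j). if j \<in> S \<and> i = \<sigma> j then 1 else 0)"

lemma dim_matching_mat [simp]:
  "dim_row (matching_mat m \<sigma> S) = m" "dim_col (matching_mat m \<sigma> S) = m"
  by (simp_all add: matching_mat_def)

lemma matching_mat_carrier: "matching_mat m \<sigma> S \<in> carrier_mat m m"
  unfolding matching_mat_def by simp

lemma differential_matching_mat:
  assumes "\<sigma> ` S \<inter> S = {}"
  shows "differential (matching_mat m \<sigma> S :: 'a::semiring_1 mat)"
proof -
  have "matching_mat m \<sigma> S * matching_mat m \<sigma> S = (0\<^sub>m m m :: 'a mat)"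
  proof (rule eq_matI)
    fix a b assume "a < dim_row (0\<^sub>m m m :: 'a mat)" and "b < dim_col (0\<^sub>m m m :: 'a mat)"
    then have ab: "a < m" "b < m" by auto
    have "(matching_mat m \<sigma> S * matching_mat m \<sigma> S :: 'a mat) $$ (a, b)
        = (\<Sum>l\<in>{0..<m}. (if l \<in> S \<and> a = \<sigma> l then 1 else 0) * (if b \<in> S \<and> l = \<sigma> b then 1 else 0))"
      using ab by (simp add: matching_mat_def scalar_prod_def)
    also have "\<dots> = 0"
      using assms by (intro sum.neutral) auto
    finally show "(matching_mat m \<sigma> S * matching_mat m \<sigma> S) $$ (a, b) = (0\<^sub>m m m :: 'a mat) $$ (a, b)"
      using ab by simp
  qed (simp_all add: matching_mat_def)
  then show ?thesis unfolding differential_def by (simp add: matching_mat_def)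
qed

lemma dim_perm_matrix [simp]:
  "dim_row (perm_matrix m p) = m" "dim_col (perm_matrix m p) = m"
  by (simp_all add: perm_matrix_def)

lemma perm_matrix_mult:
  assumes "q permutes {..<m}"
  shows "perm_matrix m p * perm_matrix m q = (perm_matrix m (p \<circ> q) :: 'a::semiring_1 mat)"
proof (rule eq_matI)
  fix i j assume "i < dim_row (perm_matrix m (p \<circ> q) :: 'a mat)" "j < dim_col (perm_matrix m (p \<circ> q) :: 'a mat)"
  then have i: "i < m" and j: "j < m" by simp_all
  have "(perm_matrix m p * perm_matrix m q :: 'a mat) $$ (i, j)
      = (\<Sum>l\<in>{0..<m}. (if i = p l then 1 else 0) * (if l = q j then 1 else 0))"
    using i j by (simp add: perm_matrix_def scalar_prod_def)
  also have "\<dots> = (\<Sum>l\<in>{0..<m}. if l = q j then (if i = p l then 1 else 0) else 0)"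
    by (intro sum.cong) auto
  also have "\<dots> = (if i = p (q j) then 1 else 0)"
    using permutes_in_image[OF assms] j by simp
  finally show "(perm_matrix m p * perm_matrix m q :: 'a mat) $$ (i, j) = perm_matrix m (p \<circ> q) $$ (i, j)"
    using i j by (simp add: perm_matrix_def)
qed simp_all

lemma perm_matrix_inverts:
  assumes "p permutes {..<m}"
  shows "inverts_mat (perm_matrix m p) (perm_matrix m (inv_into UNIV p) :: 'a::semiring_1 mat)"
    and "inverts_mat (perm_matrix m (inv_into UNIV p)) (perm_matrix m p :: 'a::semiring_1 mat)"
proof -
  have id: "perm_matrix m id = (1\<^sub>m m :: 'a mat)"
    by (rule eq_matI) (auto simp: perm_matrix_def)
  show "inverts_mat (perm_matrix m p) (perm_matrix m (inv_into UNIV p) :: 'a mat)"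
    unfolding inverts_mat_def dim_perm_matrix
    by (simp only: perm_matrix_mult[OF permutes_inv[OF assms]] permutes_inv_o(1)[OF assms] id)
  show "inverts_mat (perm_matrix m (inv_into UNIV p)) (perm_matrix m p :: 'a mat)"
    unfolding inverts_mat_def dim_perm_matrix
    by (simp only: perm_matrix_mult[OF assms] permutes_inv_o(2)[OF assms] id)
qed

lemma perm_matrix_conj_entry:
  fixes A :: "'a::semiring_1 mat"
  assumes p: "p permutes {..<m}" and A: "A \<in> carrier_mat m m" and x: "x < m" and y: "y < m"
  shows "(perm_matrix m (inv_into UNIV p) * A * perm_matrix m p) $$ (x, y) = A $$ (p x, p y)"
proof -
  have p_less: "\<And>z. z < m \<Longrightarrow> p z < m" using permutes_in_image[OF p] by auto
  have row: "(perm_matrix m (inv_into UNIV p) * A) $$ (x, z) = A $$ (p x, z)" if z: "z < m" for z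
  proof -
    have "(perm_matrix m (inv_into UNIV p) * A) $$ (x, z)
        = (\<Sum>l\<in>{0..<m}. (if x = inv_into UNIV p l then 1 else 0) * A $$ (l, z))"
      using x z A by (simp add: perm_matrix_def scalar_prod_def)
    also have "\<dots> = (\<Sum>l\<in>{0..<m}. if l = p x then A $$ (l, z) else 0)"
      by (intro sum.cong refl) (use permutes_inverses[OF p] in auto)
    also have "\<dots> = A $$ (p x, z)" using p_less[OF x] by simp
    finally show ?thesis .
  qed
  have "(perm_matrix m (inv_into UNIV p) * A * perm_matrix m p) $$ (x, y)
      = (\<Sum>l\<in>{0..<m}. (perm_matrix m (inv_into UNIV p) * A) $$ (x, l) * (if l = p y then 1 else 0))"
    using x y A by (simp add: perm_matrix_def scalar_prod_def)
  also have "\<dots> = (\<Sum>l\<in>{0..<m}. if l = p y then (perm_matrix m (inv_into UNIV p) * A) $$ (x, l) else 0)"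
    by (intro sum.cong) auto
  also have "\<dots> = A $$ (p x, p y)" using row p_less[OF y] by simp
  finally show ?thesis .
qed

lemma perm_matrix_conj_matching_mat:
  assumes "p permutes {..<m}"
  shows "perm_matrix m (inv_into UNIV p) * matching_mat m \<sigma> S * perm_matrix m p
       = (matching_mat m (inv_into UNIV p \<circ> \<sigma> \<circ> p) (p -` S) :: 'a::semiring_1 mat)"
proof (rule eq_matI)
  fix a b assume "a < dim_row (matching_mat m (inv_into UNIV p \<circ> \<sigma> \<circ> p) (p -` S) :: 'a mat)"
    and "b < dim_col (matching_mat m (inv_into UNIV p \<circ> \<sigma> \<circ> p) (p -` S) :: 'a mat)"
  then have ab: "a < m" "b < m" by simp_all
  have "(perm_matrix m (inv_into UNIV p) * matching_mat m \<sigma> S * perm_matrix m p) $$ (a, b)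
      = (matching_mat m \<sigma> S :: 'a mat) $$ (p a, p b)"
    by (rule perm_matrix_conj_entry[OF assms matching_mat_carrier ab])
  also have "\<dots> = (if p b \<in> S \<and> p a = \<sigma> (p b) then 1 else 0)"
    using ab permutes_in_image[OF assms] by (simp add: matching_mat_def)
  also have "\<dots> = matching_mat m (inv_into UNIV p \<circ> \<sigma> \<circ> p) (p -` S) $$ (a, b)"
  proof -
    have "a = inv_into UNIV p (\<sigma> (p b)) \<longleftrightarrow> p a = \<sigma> (p b)"
      by (rule bij_inv_eq_iff[OF permutes_bij[OF assms]])
    then show ?thesis using ab by (simp add: matching_mat_def)
  qed
  finally show "(perm_matrix m (inv_into UNIV p) * matching_mat m \<sigma> S * perm_matrix m p) $$ (a, b)
      = (matching_mat m (inv_into UNIV p \<circ> \<sigma> \<circ> p) (p -` S) :: 'a mat) $$ (a, b)" .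
qed simp_all

lemma jordan_of_sizes_pairs:
  assumes "2 * r \<le> m"
  shows "jordan_of_sizes (replicate r 2 @ replicate (m - 2 * r) 1)
       = (matching_mat m (\<lambda>j. j - 1) {j. odd j \<and> j < 2 * r} :: 'a::semiring_1 mat)"
proof -
  let ?ss = "replicate r (2::nat) @ replicate (m - 2 * r) 1"
  have sl: "sum_list ?ss = m" using assms by (simp add: sum_list_replicate)
  have cond: "(\<exists>i<length ?ss. ?ss ! i = 2 \<and> a = sum_list (take i ?ss) \<and> b = a + 1)
      \<longleftrightarrow> (odd b \<and> b < 2 * r \<and> a = b - 1)" for a b
  proof
    assume "\<exists>i<length ?ss. ?ss ! i = 2 \<and> a = sum_list (take i ?ss) \<and> b = a + 1"
    then obtain i where i: "i < length ?ss" "?ss ! i = 2" "a = sum_list (take i ?ss)" "b = a + 1"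
      by blast
    have "i < r" using i(1,2) by (auto simp: nth_append split: if_splits)
    then have "take i ?ss = replicate i 2" by (simp add: take_append)
    then have "a = 2 * i" using i(3) by (simp only: sum_list_replicate) simp
    then show "odd b \<and> b < 2 * r \<and> a = b - 1" using i(4) \<open>i < r\<close> by simp
  next
    assume H: "odd b \<and> b < 2 * r \<and> a = b - 1"
    then obtain i where "b = 2 * i + 1" using oddE by blast
    then have i: "i < r" "a = 2 * i" "b = a + 1" using H by auto
    then have "take i ?ss = replicate i 2" by (simp add: take_append)
    then show "\<exists>i<length ?ss. ?ss ! i = 2 \<and> a = sum_list (take i ?ss) \<and> b = a + 1"
      using i by (intro exI[of _ i]) (auto simp: nth_append sum_list_replicate)
  qed
  show ?thesis
    unfolding jordan_of_sizes_def matching_mat_def by (simp only: sl cond mem_Collect_eq conj_assoc)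
qed

lemma jordan_matching_pairs:
  assumes "2 * r \<le> m"
  shows "jordan (matching_mat m (\<lambda>j. j - 1) {j. odd j \<and> j < 2 * r} :: 'a::semiring_1 mat)"
proof -
  let ?ss = "replicate r (2::nat) @ replicate (m - 2 * r) 1"
  have "differential (matching_mat m (\<lambda>j. j - 1) {j. odd j \<and> j < 2 * r} :: 'a mat)"
    by (rule differential_matching_mat) (auto simp: even_diff_nat)
  moreover have "set ?ss \<subseteq> {1, 2}" by auto
  ultimately show ?thesis
    unfolding jordan_def using jordan_of_sizes_pairs[OF assms, symmetric] by blast
qed

lemma nth_concat_pairs:
  assumes "i < length js"
  shows "concat (map (\<lambda>j. [f j, j]) js) ! (2 * i) = f (js ! i)"
    and "concat (map (\<lambda>j. [f j, j]) js) ! (2 * i + 1) = js ! i"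
  using assms
proof (induction js arbitrary: i)
  case (Cons a js)
  case 1 then show ?case using Cons.IH(1)[of "i - 1"] by (cases i) (auto simp: nth_Cons')
next
  case (Cons a js)
  case 2 then show ?case using Cons.IH(2)[of "i - 1"] by (cases i) (auto simp: nth_Cons')
qed simp_all

lemma length_concat_pairs: "length (concat (map (\<lambda>j. [f j, j]) js)) = 2 * length js"
  by (induction js) auto

lemma exists_pairing_list:
  fixes \<sigma> :: "nat \<Rightarrow> nat"
  assumes "S \<subseteq> {..<m}" and "\<sigma> ` S \<subseteq> {..<m}" and "inj_on \<sigma> S" and "\<sigma> ` S \<inter> S = {}"
  obtains L r where "distinct L" and "set L = {..<m}" and "2 * r \<le> m"
    and "\<And>i. i < r \<Longrightarrow> L ! (2 * i + 1) \<in> S \<and> L ! (2 * i) = \<sigma> (L ! (2 * i + 1))"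
    and "\<And>j. j < m \<Longrightarrow> L ! j \<in> S \<Longrightarrow> odd j \<and> j < 2 * r"
proof -
  define js where "js = sorted_list_of_set S"
  define R where "R = sorted_list_of_set ({..<m} - (S \<union> \<sigma> ` S))"
  define P where "P = concat (map (\<lambda>j. [\<sigma> j, j]) js)"
  define r where "r = length js"
  have fin: "finite S" using assms(1) finite_subset by auto
  have js: "set js = S" "distinct js" unfolding js_def using fin by simp_all
  have P: "set P = S \<union> \<sigma> ` S" "length P = 2 * r"
    unfolding P_def r_def using js(1) by (auto simp: length_concat_pairs)
  have R: "set R = {..<m} - (S \<union> \<sigma> ` S)" "distinct R" unfolding R_def by simp_all
  have card: "card (S \<union> \<sigma> ` S) = 2 * r"
    using card_Un_disjoint[OF fin finite_imageI[OF fin]] assms(4) card_image[OF assms(3)]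
      distinct_card[OF js(2)] js(1) unfolding r_def by (simp add: Int_commute)
  have sub: "S \<union> \<sigma> ` S \<subseteq> {..<m}" using assms(1,2) by simp
  then have r: "2 * r \<le> m" using card_mono[OF finite_lessThan sub] card by simp
  have len: "length (P @ R) = m"
    using P(2) distinct_card[OF R(2)] card_Diff_subset[OF _ sub] card fin r unfolding R(1) by simp
  have set: "set (P @ R) = {..<m}" using P(1) R(1) sub by auto
  have distinct: "distinct (P @ R)" by (rule card_distinct) (simp only: len set card_lessThan)
  have pair: "(P @ R) ! (2 * i + 1) = js ! i" "(P @ R) ! (2 * i) = \<sigma> (js ! i)" if "i < r" for i
    using that nth_concat_pairs[of i js \<sigma>] P(2) unfolding P_def r_def by (simp_all add: nth_append)
  have pairs: "(P @ R) ! (2 * i + 1) \<in> S \<and> (P @ R) ! (2 * i) = \<sigma> ((P @ R) ! (2 * i + 1))"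
    if "i < r" for i
    using pair[OF that] nth_mem[of i js] that js(1) unfolding r_def by simp
  have odd: "odd j \<and> j < 2 * r" if "j < m" "(P @ R) ! j \<in> S" for j
  proof (cases "j < 2 * r")
    case True
    show ?thesis
    proof (cases "odd j")
      case False
      then obtain i where "j = 2 * i" using evenE by blast
      then have "(P @ R) ! j \<in> \<sigma> ` S"
        using pair(2)[of i] True nth_mem[of i js] js(1) unfolding r_def by simp
      then show ?thesis using that(2) assms(4) by blast
    qed (use True in simp)
  next
    case False
    then have "(P @ R) ! j \<in> set R" using P(2) len that(1) by (simp add: nth_append)
    then show ?thesis using R(1) that(2) by auto
  qed
  show thesis by (rule that[OF distinct set r pairs odd])
qed

lemma exists_pairing_perm:
  fixes \<sigma> :: "nat \<Rightarrow> nat"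
  assumes "S \<subseteq> {..<m}" and "\<sigma> ` S \<subseteq> {..<m}" and "inj_on \<sigma> S" and "\<sigma> ` S \<inter> S = {}"
  obtains p r where "p permutes {..<m}" and "2 * r \<le> m"
    and "\<And>j. j < m \<Longrightarrow> p j \<in> S \<longleftrightarrow> odd j \<and> j < 2 * r"
    and "\<And>i. i < r \<Longrightarrow> p (2 * i) = \<sigma> (p (2 * i + 1))"
proof -
  obtain L :: "nat list" and r :: nat where L: "distinct L" "set L = {..<m}" "2 * r \<le> m"
    "\<And>i. i < r \<Longrightarrow> L ! (2 * i + 1) \<in> S \<and> L ! (2 * i) = \<sigma> (L ! (2 * i + 1))"
    "\<And>j. j < m \<Longrightarrow> L ! j \<in> S \<Longrightarrow> odd j \<and> j < 2 * r"
    using exists_pairing_list[OF assms] by blast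
  have len: "length L = m" using distinct_card[OF L(1)] L(2) by simp
  define p where "p x = (if x < m then L ! x else x)" for x
  have "bij_betw ((!) L) {..<m} {..<m}" using bij_betw_nth[OF L(1)] len L(2) by simp
  then have "bij_betw p {..<m} {..<m}"
    by (rule bij_betw_cong[THEN iffD1, rotated]) (simp add: p_def)
  then have "p permutes {..<m}" by (rule bij_imp_permutes) (simp add: p_def)
  moreover have "p j \<in> S \<longleftrightarrow> odd j \<and> j < 2 * r" if "j < m" for j
  proof
    assume "odd j \<and> j < 2 * r"
    moreover obtain i where "j = 2 * i + 1" using calculation oddE by blast
    ultimately show "p j \<in> S" using L(4)[of i] that unfolding p_def by simp
  qed (use L(5) that in \<open>simp add: p_def\<close>)
  moreover have "p (2 * i) = \<sigma> (p (2 * i + 1))" if "i < r" for i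
    using L(3,4) that unfolding p_def by simp
  ultimately show thesis using that L(3) by blast
qed

lemma almost_jordan_matching_mat:
  fixes \<sigma> :: "nat \<Rightarrow> nat"
  assumes "S \<subseteq> {..<m}" and "\<sigma> ` S \<subseteq> {..<m}" and "inj_on \<sigma> S" and "\<sigma> ` S \<inter> S = {}"
  shows "almost_jordan (matching_mat m \<sigma> S :: 'a::semiring_1 mat)"
proof -
  obtain p r where p: "p permutes {..<m}" "2 * r \<le> m"
    "\<And>j. j < m \<Longrightarrow> p j \<in> S \<longleftrightarrow> odd j \<and> j < 2 * r" "\<And>i. i < r \<Longrightarrow> p (2 * i) = \<sigma> (p (2 * i + 1))"
    using exists_pairing_perm[OF assms] by blast
  have pairs: "matching_mat m (inv_into UNIV p \<circ> \<sigma> \<circ> p) (p -` S)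
      = (matching_mat m (\<lambda>j. j - 1) {j. odd j \<and> j < 2 * r} :: 'a mat)"
  proof (rule eq_matI)
    fix a j assume "a < dim_row (matching_mat m (\<lambda>j. j - 1) {j. odd j \<and> j < 2 * r} :: 'a mat)"
      and "j < dim_col (matching_mat m (\<lambda>j. j - 1) {j. odd j \<and> j < 2 * r} :: 'a mat)"
    then have a: "a < m" and j: "j < m" by simp_all
    have "p j \<in> S \<and> a = inv_into UNIV p (\<sigma> (p j)) \<longleftrightarrow> odd j \<and> j < 2 * r \<and> a = j - 1"
    proof (cases "odd j \<and> j < 2 * r")
      case True
      then obtain i where i: "j = 2 * i + 1" "i < r" using oddE by fastforce
      then have "inv_into UNIV p (\<sigma> (p j)) = j - 1"
        using p(4)[OF i(2), symmetric] permutes_inverses(2)[OF p(1)] by simp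
      then show ?thesis using True p(3)[OF j] by simp
    qed (use p(3)[OF j] in auto)
    then show "matching_mat m (inv_into UNIV p \<circ> \<sigma> \<circ> p) (p -` S) $$ (a, j)
        = (matching_mat m (\<lambda>j. j - 1) {j. odd j \<and> j < 2 * r} :: 'a mat) $$ (a, j)"
      using a j by (simp add: matching_mat_def)
  qed simp_all
  have "jordan (perm_matrix m (inv_into UNIV p) * matching_mat m \<sigma> S * perm_matrix m p :: 'a mat)"
    unfolding perm_matrix_conj_matching_mat[OF p(1)] pairs by (rule jordan_matching_pairs[OF p(2)])
  then show ?thesis
    unfolding almost_jordan_def dim_matching_mat
    using differential_matching_mat[OF assms(4)] p(1) perm_matrix_inverts[OF p(1)] by blast
qed

section \<open>Partial Jordan bases of a graded differential\<close>

locale graded_differential =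
  fixes m :: nat and D :: "'a::field mat" and g :: "nat \<Rightarrow> nat"
  assumes D_carrier: "D \<in> carrier_mat m m"
    and D_square_zero: "D * D = 0\<^sub>m m m"
    and D_degree: "\<And>a b. a < m \<Longrightarrow> b < m \<Longrightarrow> D $$ (a, b) \<noteq> 0 \<Longrightarrow> g b = Suc (g a)"
    and grading_mono: "\<And>a b. a \<le> b \<Longrightarrow> b < m \<Longrightarrow> g a \<le> g b"
begin

lemma dim_D [simp]: "dim_row D = m" "dim_col D = m"
  using D_carrier by auto

lemma D_nonzero_imp_less:
  assumes "a < m" and "b < m" and "D $$ (a, b) \<noteq> 0"
  shows "a < b"
  using D_degree[OF assms] grading_mono[of b a] assms(1) by fastforce

lemma column_support:
  assumes "n < m" and "mat_app D (\<lambda>y. of_bool (y = n)) x \<noteq> 0"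
  shows "x < n \<and> Suc (g x) = g n"
proof -
  have "x < m" and "D $$ (x, n) \<noteq> 0"
    using assms mat_app_unit[of n D] D_carrier by (auto split: if_splits)
  then show ?thesis using D_nonzero_imp_less[of x n] D_degree[of x n] assms(1) by simp
qed

lemma mat_app_square_zero: "mat_app D (mat_app D v) = (\<lambda>_. 0)"
  using mat_app_mult[OF D_carrier D_carrier, of v] D_square_zero by (simp add: mat_app_def fun_eq_iff)

end

locale partial_jordan_basis = graded_differential +
  fixes n :: nat and b :: "nat \<Rightarrow> nat \<Rightarrow> 'a::field" and \<sigma> :: "nat \<Rightarrow> nat" and S :: "nat set"
  assumes triangular: "triangular_family n b"
    and basis_homogeneous: "\<And>j. j < n \<Longrightarrow> homogeneous g (g j) (b j)"
    and sources: "S \<subseteq> {..<n}"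
    and targets: "\<sigma> ` S \<subseteq> {..<n}"
    and inj_\<sigma>: "inj_on \<sigma> S"
    and sources_targets_disjoint: "\<sigma> ` S \<inter> S = {}"
    and action: "\<And>j. j < n \<Longrightarrow> mat_app D (b j) = (if j \<in> S then b (\<sigma> j) else (\<lambda>_. 0))"
begin

lemma degree_source:
  assumes "j \<in> S"
  shows "g j = Suc (g (\<sigma> j))"
proof -
  have j: "j < n" "\<sigma> j < n" using assms sources targets by auto
  have "mat_app D (b j) (\<sigma> j) \<noteq> 0"
    using action[OF j(1)] triangular j(2) assms unfolding triangular_family_def by auto
  then have "\<sigma> j < m" and "(\<Sum>y<m. D $$ (\<sigma> j, y) * b j y) \<noteq> 0"
    unfolding mat_app_def by (simp_all split: if_splits)
  moreover obtain y where "y \<in> {..<m}" and "D $$ (\<sigma> j, y) * b j y \<noteq> 0"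
    using calculation(2) by (meson sum.not_neutral_contains_not_neutral)
  ultimately have "g y = Suc (g (\<sigma> j))" and "g y = g j"
    using D_degree[of "\<sigma> j" y] basis_homogeneous[OF j(1)] unfolding homogeneous_def by auto
  then show ?thesis by simp
qed

lemma lin_comb_action:
  "lin_comb w (\<lambda>j. mat_app D (b j)) {..<n} = lin_comb (\<lambda>i. w (inv_into S \<sigma> i)) b (\<sigma> ` S)"
proof -
  have "lin_comb w (\<lambda>j. mat_app D (b j)) {..<n} x = lin_comb w (\<lambda>j. b (\<sigma> j)) S x" for x
  proof -
    have "lin_comb w (\<lambda>j. mat_app D (b j)) {..<n} x = (\<Sum>j<n. if j \<in> S then w j * b (\<sigma> j) x else 0)"
      unfolding lin_comb_def using action by (intro sum.cong) auto
    also have "\<dots> = (\<Sum>j\<in>{..<n} \<inter> S. w j * b (\<sigma> j) x)" by (simp add: sum.inter_restrict)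
    finally show ?thesis using sources unfolding lin_comb_def by (simp add: Int_absorb1)
  qed
  then have "lin_comb w (\<lambda>j. mat_app D (b j)) {..<n} = lin_comb w (\<lambda>j. b (\<sigma> j)) S" by blast
  also have "\<dots> = lin_comb (\<lambda>i. w (inv_into S \<sigma> i)) b (\<sigma> ` S)"
    unfolding lin_comb_def by (simp add: sum.reindex[OF inj_\<sigma>] inv_into_f_f[OF inj_\<sigma>])
  finally show ?thesis .
qed

lemma coeff_source_eq_0:
  assumes "mat_app D (lin_comb w b {..<n}) = (\<lambda>_. 0)" and "j \<in> S"
  shows "w j = 0"
proof -
  have "lin_comb (\<lambda>i. w (inv_into S \<sigma> i)) b (\<sigma> ` S) = (\<lambda>_. 0)"
    using assms(1) lin_comb_action by (simp add: mat_app_lin_comb)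
  then have "w (inv_into S \<sigma> (\<sigma> j)) = 0"
    using lin_comb_eq_0_imp_coeff_eq_0[OF triangular targets] assms(2) by blast
  then show ?thesis using inv_into_f_f[OF inj_\<sigma> assms(2)] by simp
qed

lemma extend_by_kernel_vector:
  assumes "v n \<noteq> 0" and "\<And>x. n < x \<Longrightarrow> v x = 0" and "homogeneous g (g n) v"
    and "mat_app D v = (\<lambda>_. 0)"
  shows "partial_jordan_basis m D g (Suc n) (b(n := v)) \<sigma> S"
proof (rule partial_jordan_basis.intro[OF graded_differential_axioms partial_jordan_basis_axioms.intro])
  show "triangular_family (Suc n) (b(n := v))"
    using triangular assms(1,2) unfolding triangular_family_def by (auto simp: less_Suc_eq)
  show "homogeneous g (g j) ((b(n := v)) j)" if "j < Suc n" for j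
    using basis_homogeneous assms(3) that by (auto simp: less_Suc_eq)
  show "S \<subseteq> {..<Suc n}" and "\<sigma> ` S \<subseteq> {..<Suc n}" using sources targets by auto
  show "inj_on \<sigma> S" and "\<sigma> ` S \<inter> S = {}" by (fact inj_\<sigma> sources_targets_disjoint)+
  show "mat_app D ((b(n := v)) j) = (if j \<in> S then (b(n := v)) (\<sigma> j) else (\<lambda>_. 0))"
    if "j < Suc n" for j
    using action assms(4) sources targets that by (auto simp: less_Suc_eq)
qed

lemma extend_by_pair:
  assumes i: "i < n" "i \<notin> S" "i \<notin> \<sigma> ` S"
    and u: "u i \<noteq> 0" "\<And>x. i < x \<Longrightarrow> u x = 0" "homogeneous g (g i) u" "mat_app D u = (\<lambda>_. 0)"
    and v: "v n \<noteq> 0" "\<And>x. n < x \<Longrightarrow> v x = 0" "homogeneous g (g n) v" "mat_app D v = u"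
  shows "partial_jordan_basis m D g (Suc n) (b(n := v, i := u)) (\<sigma>(n := i)) (insert n S)"
proof (rule partial_jordan_basis.intro[OF graded_differential_axioms partial_jordan_basis_axioms.intro])
  have "n \<notin> S" "n \<notin> \<sigma> ` S" "i \<noteq> n" using sources targets i(1) by auto
  then have image: "(\<sigma>(n := i)) ` insert n S = insert i (\<sigma> ` S)" by auto
  show "triangular_family (Suc n) (b(n := v, i := u))"
    using triangular u(1,2) v(1,2) \<open>i \<noteq> n\<close> unfolding triangular_family_def by (auto simp: less_Suc_eq)
  show "homogeneous g (g j) ((b(n := v, i := u)) j)" if "j < Suc n" for j
    using basis_homogeneous u(3) v(3) that by (auto simp: less_Suc_eq)
  show "insert n S \<subseteq> {..<Suc n}" using sources by auto
  show "(\<sigma>(n := i)) ` insert n S \<subseteq> {..<Suc n}" unfolding image using targets i(1) by auto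
  show "inj_on (\<sigma>(n := i)) (insert n S)"
    using inj_\<sigma> i(3) \<open>n \<notin> S\<close> by (auto simp: inj_on_def)
  show "(\<sigma>(n := i)) ` insert n S \<inter> insert n S = {}"
    unfolding image using sources_targets_disjoint i(2) \<open>n \<notin> \<sigma> ` S\<close> \<open>i \<noteq> n\<close> by auto
  show "mat_app D ((b(n := v, i := u)) j)
      = (if j \<in> insert n S then (b(n := v, i := u)) ((\<sigma>(n := i)) j) else (\<lambda>_. 0))"
    if "j < Suc n" for j
  proof -
    consider "j = n" | "j = i" | "j < n" "j \<noteq> i" using \<open>j < Suc n\<close> by linarith
    then show ?thesis
    proof cases
      case 3
      then have "j \<in> S \<Longrightarrow> \<sigma> j \<noteq> n \<and> \<sigma> j \<noteq> i" using targets i(3) by auto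
      then show ?thesis using action[OF \<open>j < n\<close>] 3 \<open>n \<notin> S\<close> by auto
    qed (use u(4) v(4) i(2) \<open>i \<noteq> n\<close> in auto)
  qed
qed

lemma column_expansion:
  assumes "n < m"
  obtains w where "mat_app D (\<lambda>y. of_bool (y = n)) = lin_comb w b {..<n}"
    and "\<And>j. w j \<noteq> 0 \<Longrightarrow> j < n \<and> Suc (g j) = g n" and "\<And>j. j \<in> S \<Longrightarrow> w j = 0"
proof -
  have "\<exists>w. mat_app D (\<lambda>y. of_bool (y = n)) = lin_comb w b {..<n}
      \<and> (\<forall>j. w j \<noteq> 0 \<longrightarrow> j < n \<and> Suc (g j) = g n)"
    using triangular_family_expansion[OF triangular basis_homogeneous,
        where v = "mat_app D (\<lambda>y. of_bool (y = n))" and P = "\<lambda>d. Suc d = g n"]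
      column_support[OF assms] by blast
  then obtain w where w: "mat_app D (\<lambda>y. of_bool (y = n)) = lin_comb w b {..<n}"
    "\<And>j. w j \<noteq> 0 \<Longrightarrow> j < n \<and> Suc (g j) = g n" by blast
  have "mat_app D (lin_comb w b {..<n}) = (\<lambda>_. 0)"
    using mat_app_square_zero[of "\<lambda>y. of_bool (y = n)"] unfolding w(1) .
  then have "w j = 0" if "j \<in> S" for j using coeff_source_eq_0 that by blast
  with w show thesis by (rule that)
qed

lemma lin_comb_decompose:
  "lin_comb w b {..<n} x
    = lin_comb w b S x + (lin_comb w b (\<sigma> ` S) x + lin_comb w b ({..<n} - S - \<sigma> ` S) x)"
proof -
  define J where "J = {..<n} - S - \<sigma> ` S"
  have fin: "finite S" "finite (\<sigma> ` S)" "finite J"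
    using sources finite_subset unfolding J_def by auto
  have "{..<n} = S \<union> (\<sigma> ` S \<union> J)" unfolding J_def using sources targets by auto
  moreover have "S \<inter> (\<sigma> ` S \<union> J) = {}" and "\<sigma> ` S \<inter> J = {}"
    using sources_targets_disjoint unfolding J_def by auto
  ultimately have "lin_comb w b {..<n} x = lin_comb w b S x + (lin_comb w b (\<sigma> ` S) x + lin_comb w b J x)"
    using fin by (simp add: lin_comb_union)
  then show ?thesis unfolding J_def .
qed

lemma mat_app_lin_comb_sources:
  "mat_app D (lin_comb (\<lambda>j. w (\<sigma> j)) b S) = lin_comb w b (\<sigma> ` S)"
proof -
  have "mat_app D (lin_comb (\<lambda>j. w (\<sigma> j)) b S) = lin_comb (\<lambda>j. w (\<sigma> j)) (\<lambda>j. b (\<sigma> j)) S"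
    unfolding mat_app_lin_comb lin_comb_def using action sources by (intro ext sum.cong) auto
  also have "\<dots> = lin_comb w b (\<sigma> ` S)"
    unfolding lin_comb_def by (simp add: sum.reindex[OF inj_\<sigma>])
  finally show ?thesis .
qed

lemma next_basis_vector:
  assumes "n < m"
    and w: "mat_app D (\<lambda>y. of_bool (y = n)) = lin_comb w b {..<n}"
      "\<And>j. w j \<noteq> 0 \<Longrightarrow> j < n \<and> Suc (g j) = g n" "\<And>j. j \<in> S \<Longrightarrow> w j = 0"
    and J_def: "J = {..<n} - S - \<sigma> ` S"
    and v_def: "v = (\<lambda>x. of_bool (x = n) - lin_comb (\<lambda>j. w (\<sigma> j)) b S x)"
  shows "mat_app D v = lin_comb w b J"
    and "v n \<noteq> 0" and "\<And>x. n < x \<Longrightarrow> v x = 0" and "homogeneous g (g n) v"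
proof -
  have "lin_comb w b S x = 0" for x using w(3) unfolding lin_comb_def by simp
  then show "mat_app D v = lin_comb w b J"
    unfolding v_def mat_app_diff mat_app_lin_comb_sources w(1) lin_comb_decompose J_def by simp
  have below: "lin_comb (\<lambda>j. w (\<sigma> j)) b S x = 0" if "n \<le> x" for x
    unfolding lin_comb_def
  proof (intro sum.neutral ballI)
    fix j assume "j \<in> S"
    then have "j < x" using sources that by auto
    then show "w (\<sigma> j) * b j x = 0" using triangular \<open>j \<in> S\<close> sources
      unfolding triangular_family_def by auto
  qed
  show "v n \<noteq> 0" and "\<And>x. n < x \<Longrightarrow> v x = 0" unfolding v_def using below by auto
  have "homogeneous g (g n) (lin_comb (\<lambda>j. w (\<sigma> j)) b S)"
  proof (rule homogeneous_lin_comb)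
    fix j assume "j \<in> S" and "w (\<sigma> j) \<noteq> 0"
    then have "g j = g n" using degree_source[of j] w(2)[of "\<sigma> j"] by simp
    then show "homogeneous g (g n) (b j)" using basis_homogeneous[of j] \<open>j \<in> S\<close> sources by auto
  qed
  moreover have "homogeneous g (g n) (\<lambda>x. of_bool (x = n) :: 'a)" by (simp add: homogeneous_def)
  ultimately show "homogeneous g (g n) v" unfolding v_def by (rule homogeneous_diff[rotated])
qed

lemma exists_extension:
  assumes "n < m"
  shows "\<exists>b' \<sigma>' S'. partial_jordan_basis m D g (Suc n) b' \<sigma>' S'"
proof -
  obtain w where w: "mat_app D (\<lambda>y. of_bool (y = n)) = lin_comb w b {..<n}"
    "\<And>j. w j \<noteq> 0 \<Longrightarrow> j < n \<and> Suc (g j) = g n" "\<And>j. j \<in> S \<Longrightarrow> w j = 0"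
    using column_expansion[OF assms] by blast
  define J where "J = {..<n} - S - \<sigma> ` S"
  \<comment> \<open>subtracting the preimages of the matched part of \<open>D e\<^sub>n\<close> leaves \<open>D v\<close> with the unmatched part\<close>
  define v where "v = (\<lambda>x. of_bool (x = n) - lin_comb (\<lambda>j. w (\<sigma> j)) b S x)"
  note v = next_basis_vector[OF assms w J_def v_def]
  have "J \<subseteq> {..<n}" unfolding J_def by auto
  have killed: "mat_app D (lin_comb w b J) = (\<lambda>_. 0)"
    using action \<open>J \<subseteq> {..<n}\<close> unfolding mat_app_lin_comb J_def lin_comb_def
    by (intro ext sum.neutral) auto
  show ?thesis
  proof (cases "\<forall>j\<in>J. w j = 0")
    case True
    then have "mat_app D v = (\<lambda>_. 0)" using v(1) unfolding lin_comb_def by simp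
    with v(2-4) have "partial_jordan_basis m D g (Suc n) (b(n := v)) \<sigma> S"
      by (rule extend_by_kernel_vector)
    then show ?thesis by blast
  next
    case False
    \<comment> \<open>the pivot of the unmatched part; it replaces \<open>b i\<close>, which lies in the kernel and is no target\<close>
    define i where "i = Max {j\<in>J. w j \<noteq> 0}"
    have fin: "finite {j\<in>J. w j \<noteq> 0}" unfolding J_def by simp
    have i: "i \<in> J" "w i \<noteq> 0" using Max_in[OF fin] False unfolding i_def by auto
    have i_max: "\<And>j. j \<in> J \<Longrightarrow> w j \<noteq> 0 \<Longrightarrow> j \<le> i" using Max_ge[OF fin] unfolding i_def by auto
    note pivot = lin_comb_pivot[OF triangular \<open>J \<subseteq> {..<n}\<close> i(1) i_max]
    have "lin_comb w b J i \<noteq> 0"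
      using pivot(1) i triangular \<open>J \<subseteq> {..<n}\<close> unfolding triangular_family_def by auto
    moreover have "homogeneous g (g i) (lin_comb w b J)"
    proof (rule homogeneous_lin_comb)
      fix j assume "j \<in> J" and "w j \<noteq> 0"
      then have "g j = g i" using w(2)[of j] w(2)[of i] i(2) by simp
      moreover have "j < n" using \<open>j \<in> J\<close> \<open>J \<subseteq> {..<n}\<close> by auto
      ultimately show "homogeneous g (g i) (b j)" using basis_homogeneous[of j] by simp
    qed
    moreover have "i < n" "i \<notin> S" "i \<notin> \<sigma> ` S" using i(1) unfolding J_def by auto
    ultimately have "partial_jordan_basis m D g (Suc n) (b(n := v, i := lin_comb w b J))
        (\<sigma>(n := i)) (insert n S)"
      using extend_by_pair pivot(2) killed v by blast
    then show ?thesis by blast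
  qed
qed

lemma conjugates_matching_mat:
  assumes "n = m"
  defines "B \<equiv> mat m m (\<lambda>(x, j). b j x)"
  shows "D * B = B * matching_mat m \<sigma> S"
proof (rule eq_matI)
  fix x j assume "x < dim_row (B * matching_mat m \<sigma> S)" and "j < dim_col (B * matching_mat m \<sigma> S)"
  then have x: "x < m" and j: "j < m" unfolding B_def by simp_all
  have "(D * B) $$ (x, j) = mat_app D (b j) x"
    using x j D_carrier unfolding B_def mat_app_def by (simp add: scalar_prod_def atLeast0LessThan)
  also have "\<dots> = (if j \<in> S then b (\<sigma> j) x else 0)" using action j assms(1) by simp
  also have "\<dots> = (\<Sum>l\<in>{0..<m}. b l x * (if j \<in> S \<and> l = \<sigma> j then 1 else 0))"
    using targets assms(1) by (auto simp: if_distrib cong: if_cong)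
  also have "\<dots> = (B * matching_mat m \<sigma> S) $$ (x, j)"
    using x j unfolding B_def by (simp add: matching_mat_def scalar_prod_def)
  finally show "(D * B) $$ (x, j) = (B * matching_mat m \<sigma> S) $$ (x, j)" .
qed (use D_carrier in \<open>simp_all add: B_def\<close>)

end

context graded_differential
begin

lemma exists_partial_jordan_basis:
  assumes "n \<le> m"
  shows "\<exists>b \<sigma> S. partial_jordan_basis m D g n b \<sigma> S"
  using assms
proof (induction n)
  case 0
  have "partial_jordan_basis m D g 0 (\<lambda>_ _. 0) id {}"
    by (rule partial_jordan_basis.intro[OF graded_differential_axioms partial_jordan_basis_axioms.intro])
      (simp_all add: triangular_family_def)
  then show ?case by blast
next
  case (Suc n)
  then obtain b \<sigma> S where "partial_jordan_basis m D g n b \<sigma> S" by auto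
  then show ?case using partial_jordan_basis.exists_extension Suc.prems by (simp add: Suc_le_eq)
qed

theorem graded_normal_form:
  obtains B B' D' where "B \<in> carrier_mat m m" and "upper_triangular B"
    and "inverts_mat B B'" and "inverts_mat B' B"
    and "\<And>a j. a < m \<Longrightarrow> j < m \<Longrightarrow> B $$ (a, j) \<noteq> 0 \<Longrightarrow> g a = g j"
    and "D' \<in> carrier_mat m m" and "almost_jordan D'"
    and "\<And>a j. a < m \<Longrightarrow> j < m \<Longrightarrow> D' $$ (a, j) \<noteq> 0 \<Longrightarrow> g j = Suc (g a)"
    and "D = B * D' * B'"
proof -
  obtain b \<sigma> S where "partial_jordan_basis m D g m b \<sigma> S"
    using exists_partial_jordan_basis by blast
  then interpret partial_jordan_basis m D g m b \<sigma> S .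
  define B where "B = mat m m (\<lambda>(x, j). b j x)"
  have B: "B \<in> carrier_mat m m" unfolding B_def by simp
  obtain B' where B': "B' \<in> carrier_mat m m" "inverts_mat B B'" "inverts_mat B' B"
    using triangular_family_mat(2)[OF triangular] unfolding B_def by blast
  have "D = D * (B * B')" using B B' D_carrier unfolding inverts_mat_def by simp
  also have "\<dots> = (D * B) * B'" using B B'(1) D_carrier by (simp add: assoc_mult_mat)
  also have "\<dots> = B * matching_mat m \<sigma> S * B'"
    using conjugates_matching_mat[OF refl] unfolding B_def by simp
  finally have conj: "D = B * matching_mat m \<sigma> S * B'" .
  have upper: "upper_triangular B" using triangular_family_mat(1)[OF triangular] unfolding B_def .
  have homog: "g a = g j" if "a < m" "j < m" "B $$ (a, j) \<noteq> 0" for a j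
    using basis_homogeneous[of j] that unfolding B_def homogeneous_def by simp
  have aj: "almost_jordan (matching_mat m \<sigma> S :: 'a mat)"
    by (rule almost_jordan_matching_mat[OF sources targets inj_\<sigma> sources_targets_disjoint])
  have degree: "g j = Suc (g a)" if "a < m" "j < m" "matching_mat m \<sigma> S $$ (a, j) \<noteq> (0 :: 'a)" for a j
    using that degree_source[of j] by (simp add: matching_mat_def split: if_splits)
  show thesis
    by (rule that[OF B upper B'(2,3) homog matching_mat_carrier aj degree conj])
qed

end

theorem theorem1p4:
  fixes D :: "'a::field mat" and m k :: nat and c :: "nat \<Rightarrow> nat"
  assumes "interval_partition m k c"
    and "D \<in> carrier_mat m m"
    and "differential D"
    and "block_superdiagonal k c D"
  shows "\<exists>Dbar B Binv. Dbar \<in> carrier_mat m m \<and> B \<in> carrier_mat m m \<and>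
           almost_jordan Dbar \<and> block_superdiagonal k c Dbar \<and>
           triangular B \<and> block_diagonal k c B \<and>
           inverts_mat B Binv \<and> inverts_mat Binv B \<and>
           D = B * Dbar * Binv"
proof -
  interpret graded_differential m D "block_index c"
  proof
    show "D \<in> carrier_mat m m" by (fact assms(2))
    show "D * D = 0\<^sub>m m m" using assms(2,3) unfolding differential_def by simp
    show "block_index c b = Suc (block_index c a)" if "a < m" "b < m" "D $$ (a, b) \<noteq> 0" for a b
      using assms(4) that unfolding block_superdiagonal_iff[OF assms(1)] by blast
    show "block_index c a \<le> block_index c b" if "a \<le> b" "b < m" for a b
      using block_index_mono[OF assms(1) that] .
  qed
  obtain B B' D' where B: "B \<in> carrier_mat m m" "upper_triangular B" "inverts_mat B B'" "inverts_mat B' B"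
    "\<And>a j. a < m \<Longrightarrow> j < m \<Longrightarrow> B $$ (a, j) \<noteq> 0 \<Longrightarrow> block_index c a = block_index c j"
    and D': "D' \<in> carrier_mat m m" "almost_jordan D'"
    "\<And>a j. a < m \<Longrightarrow> j < m \<Longrightarrow> D' $$ (a, j) \<noteq> 0 \<Longrightarrow> block_index c j = Suc (block_index c a)"
    and "D = B * D' * B'"
    using graded_normal_form by blast
  have "square_mat B" using B(1) by auto
  then have "triangular B" unfolding triangular_def invertible_mat_def using B(2-4) by blast
  moreover have "block_diagonal k c B" unfolding block_diagonal_iff[OF assms(1)] using B(5) by blast
  moreover have "block_superdiagonal k c D'"
    unfolding block_superdiagonal_iff[OF assms(1)] using D'(3) by blast
  ultimately show ?thesis using B(1,3,4) D'(1,2) \<open>D = B * D' * B'\<close> by blast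
qed

end
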